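(* Let $G$ be a simple graph and $W\subseteq V(G)$, and let $\varphi'$ be an assignment of the colors $I,F$ to the vertices of $W$ that is a near-bipartite coloring of $G[W]$. Suppose $G-W$ is a forest in which every vertex has degree 3 in $G$. If every component $T$ of $G-W$ is $F$-odd or $F$-leaf-good, then $\varphi'$ extends to a near-bipartite coloring of $G$.
   Context: A near-bipartite coloring is a partition into $I,F$ with $I$ independent and the subgraph induced by $F$ a forest. An $F$-edge is an edge joining a vertex of $G-W$ to a vertex of $W$ colored $F$ by $\varphi'$. A component $T$ of $G-W$ is $F$-odd if the number of $F$-edges incident to $V(T)$ is odd, and $F$-leaf-good if some leaf of $T$ (vertex of degree at most 1 in $T$) has at least two neighbors in $W$ colored $I$. *)

theory Defs
  imports Main
begin

definition simple_graph :: "'a set \<Rightarrow> ('a \<Rightarrow> 'a \<Rightarrow> bool) \<Rightarrow> bool" where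
  "simple_graph V E \<longleftrightarrow> finite V \<and> (\<forall>u v. E u v \<longrightarrow> u \<in> V \<and> v \<in> V)
     \<and> (\<forall>u v. E u v \<longrightarrow> E v u) \<and> (\<forall>v. \<not> E v v)"

datatype color = CI | CF

definition has_cycle_in :: "('a \<Rightarrow> 'a \<Rightarrow> bool) \<Rightarrow> 'a set \<Rightarrow> bool" where
  "has_cycle_in E S \<longleftrightarrow> (\<exists>cs. length cs \<ge> 3 \<and> distinct cs \<and> set cs \<subseteq> S
     \<and> (\<forall>i. Suc i < length cs \<longrightarrow> E (cs ! i) (cs ! Suc i))
     \<and> E (last cs) (hd cs))"

definition induces_forest :: "('a \<Rightarrow> 'a \<Rightarrow> bool) \<Rightarrow> 'a set \<Rightarrow> bool" where
  "induces_forest E S \<longleftrightarrow> \<not> has_cycle_in E S"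

definition independent :: "('a \<Rightarrow> 'a \<Rightarrow> bool) \<Rightarrow> 'a set \<Rightarrow> bool" where
  "independent E S \<longleftrightarrow> (\<forall>u\<in>S. \<forall>v\<in>S. \<not> E u v)"

definition near_bipartite_on :: "('a \<Rightarrow> 'a \<Rightarrow> bool) \<Rightarrow> 'a set \<Rightarrow> ('a \<Rightarrow> color) \<Rightarrow> bool" where
  "near_bipartite_on E S col \<longleftrightarrow>
     independent E {v \<in> S. col v = CI} \<and> induces_forest E {v \<in> S. col v = CF}"

definition degree :: "'a set \<Rightarrow> ('a \<Rightarrow> 'a \<Rightarrow> bool) \<Rightarrow> 'a \<Rightarrow> nat" where
  "degree V E v = card {u \<in> V. E v u}"

definition reach_in :: "('a \<Rightarrow> 'a \<Rightarrow> bool) \<Rightarrow> 'a set \<Rightarrow> 'a \<Rightarrow> 'a \<Rightarrow> bool" where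
  "reach_in E S = (\<lambda>x y. x \<in> S \<and> y \<in> S \<and> E x y)\<^sup>*\<^sup>*"

definition components_of :: "('a \<Rightarrow> 'a \<Rightarrow> bool) \<Rightarrow> 'a set \<Rightarrow> 'a set set" where
  "components_of E S = {{y. reach_in E S x y} | x. x \<in> S}"

definition F_edges_count :: "('a \<Rightarrow> 'a \<Rightarrow> bool) \<Rightarrow> 'a set \<Rightarrow> ('a \<Rightarrow> color) \<Rightarrow> 'a set \<Rightarrow> nat" where
  "F_edges_count E W col T = card {(u, w). u \<in> T \<and> w \<in> W \<and> E u w \<and> col w = CF}"

definition F_odd :: "('a \<Rightarrow> 'a \<Rightarrow> bool) \<Rightarrow> 'a set \<Rightarrow> ('a \<Rightarrow> color) \<Rightarrow> 'a set \<Rightarrow> bool" where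
  "F_odd E W col T \<longleftrightarrow> odd (F_edges_count E W col T)"

definition F_leaf_good :: "('a \<Rightarrow> 'a \<Rightarrow> bool) \<Rightarrow> 'a set \<Rightarrow> ('a \<Rightarrow> color) \<Rightarrow> 'a set \<Rightarrow> bool" where
  "F_leaf_good E W col T \<longleftrightarrow>
     (\<exists>v\<in>T. card {u \<in> T. E v u} \<le> 1 \<and> card {w \<in> W. E v w \<and> col w = CI} \<ge> 2)"

end

theory Submission
  imports Defs
begin

text \<open>Induction on the number of uncoloured vertices. A leaf v of a component T of G - W has
  degree 3 and at most one neighbour in T, hence at least two neighbours in W. Colour v with I
  if none of them is coloured I, and with F otherwise; in the latter case the hypothesis on T
  leaves v at most one F-neighbour, so no F-cycle arises. The leaf is chosen away from a good
  leaf of T if T has one, which then survives in T - {v}. Otherwise T is F-odd and v has at most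
  one I-neighbour: coloured I it removes two F-edges of T, coloured F it trades its single F-edge
  for the edge into T - {v}; either way T - {v} stays F-odd.\<close>

lemma has_cycle_in_mono: "has_cycle_in E A \<Longrightarrow> A \<subseteq> B \<Longrightarrow> has_cycle_in E B"
  unfolding has_cycle_in_def by blast

lemma induces_forest_subset: "induces_forest E B \<Longrightarrow> A \<subseteq> B \<Longrightarrow> induces_forest E A"
  unfolding induces_forest_def using has_cycle_in_mono by blast

lemma cycle_wraparound_edge:
  assumes "length cs \<ge> 3" "\<forall>i. Suc i < length cs \<longrightarrow> E (cs ! i) (cs ! Suc i)"
    "E (last cs) (hd cs)" "i < length cs"
  shows "E (cs ! i) (cs ! (Suc i mod length cs))"
proof (cases "Suc i < length cs")
  case True
  then show ?thesis using assms(2) by simp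
next
  case False
  then have "Suc i = length cs" using assms(4) by simp
  then have "i = length cs - 1" "Suc i mod length cs = 0" by auto
  moreover have "cs \<noteq> []" using assms(1) by auto
  ultimately show ?thesis using assms(3) by (simp add: last_conv_nth hd_conv_nth)
qed

text \<open>A cycle through v leaves v along two distinct edges, so v needs two neighbours in S.\<close>
lemma induces_forest_insert:
  assumes forest: "induces_forest E S" and sym: "\<forall>u v. E u v \<longrightarrow> E v u"
    and leaf: "\<forall>a\<in>S. \<forall>b\<in>S. E v a \<longrightarrow> E v b \<longrightarrow> a = b"
  shows "induces_forest E (insert v S)"
  unfolding induces_forest_def
proof
  assume "has_cycle_in E (insert v S)"
  then obtain cs where l3: "length cs \<ge> 3" and dc: "distinct cs" and sc: "set cs \<subseteq> insert v S"
    and ec: "\<forall>i. Suc i < length cs \<longrightarrow> E (cs ! i) (cs ! Suc i)" and el: "E (last cs) (hd cs)"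
    unfolding has_cycle_in_def by blast
  define n where "n = length cs"
  have "v \<in> set cs"
    using forest l3 dc sc ec el unfolding induces_forest_def has_cycle_in_def by blast
  then obtain k where k: "k < n" "cs ! k = v" unfolding n_def by (metis in_set_conv_nth)
  define a where "a = Suc k mod n"
  define b where "b = (k + n - 1) mod n"
  have n3: "n \<ge> 3" using l3 n_def by simp
  have ab: "a < n" "b < n" "Suc b mod n = k" using k unfolding a_def b_def by (auto simp: mod_Suc_eq)
  have "a \<noteq> b" "a \<noteq> k" "b \<noteq> k"
    using k n3 unfolding a_def b_def by (auto simp: mod_if split: if_splits)
  then have "cs ! a \<noteq> cs ! b" "cs ! a \<noteq> v" "cs ! b \<noteq> v"
    using dc ab k unfolding n_def by (auto simp: nth_eq_iff_index_eq)
  moreover have "cs ! a \<in> insert v S" "cs ! b \<in> insert v S"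
    using sc ab unfolding n_def by (meson nth_mem subsetD)+
  moreover have "E v (cs ! a)" "E v (cs ! b)"
    using cycle_wraparound_edge[OF l3 ec el] k ab sym unfolding a_def n_def by metis+
  ultimately show False using leaf by blast
qed

definition is_path_from :: "('a \<Rightarrow> 'a \<Rightarrow> bool) \<Rightarrow> 'a set \<Rightarrow> 'a \<Rightarrow> 'a list \<Rightarrow> bool" where
  "is_path_from E T x p \<longleftrightarrow> p \<noteq> [] \<and> hd p = x \<and> distinct p \<and> set p \<subseteq> T
     \<and> (\<forall>i. Suc i < length p \<longrightarrow> E (p ! i) (p ! Suc i))"

lemma is_path_from_snoc:
  assumes "is_path_from E T x p" "z \<in> T" "z \<notin> set p" "E (last p) z"
  shows "is_path_from E T x (p @ [z])"
proof -
  have "E ((p @ [z]) ! i) ((p @ [z]) ! Suc i)" if "Suc i < length (p @ [z])" for i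
  proof (cases "Suc i < length p")
    case True
    then show ?thesis using assms(1) unfolding is_path_from_def by (simp add: nth_append)
  next
    case False
    then have "i = length p - 1" using that by simp
    then show ?thesis using assms(1,4) False unfolding is_path_from_def by (simp add: nth_append last_conv_nth)
  qed
  then show ?thesis using assms unfolding is_path_from_def by auto
qed

lemma back_edge_closes_cycle:
  assumes "is_path_from E T x p" "j + 2 < length p" "E (last p) (p ! j)"
  shows "has_cycle_in E T"
  unfolding has_cycle_in_def
proof (intro exI conjI allI impI)
  show "3 \<le> length (drop j p)" "distinct (drop j p)" "set (drop j p) \<subseteq> T"
    using assms(1,2) unfolding is_path_from_def by (auto dest: in_set_dropD)
  show "E (drop j p ! i) (drop j p ! Suc i)" if "Suc i < length (drop j p)" for i
    using assms(1) that unfolding is_path_from_def by auto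
  show "E (last (drop j p)) (hd (drop j p))"
    using assms(2,3) by (simp add: hd_drop_conv_nth)
qed

lemma longest_path_last_nbr:
  assumes p: "is_path_from E T x p" and longest: "\<And>q. is_path_from E T x q \<Longrightarrow> length q \<le> length p"
    and forest: "induces_forest E T" and irr: "\<forall>v. \<not> E v v" and z: "z \<in> T" "E (last p) z"
  shows "length p \<ge> 2 \<and> z = p ! (length p - 2)"
proof -
  define n where "n = length p"
  have last: "last p = p ! (n - 1)"
    using p unfolding n_def is_path_from_def by (simp add: last_conv_nth)
  have "z \<in> set p"
  proof (rule ccontr)
    assume "z \<notin> set p"
    from longest[OF is_path_from_snoc[OF p z(1) this z(2)]] show False by simp
  qed
  then obtain j where j: "j < n" "z = p ! j" unfolding n_def by (metis in_set_conv_nth)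
  have "j \<noteq> n - 1" using j(2) z(2) last irr by auto
  moreover have "\<not> j + 2 < n"
    using back_edge_closes_cycle[OF p, of j] j(2) z(2) forest
    unfolding n_def induces_forest_def by auto
  ultimately have "n \<ge> 2" "j = n - 2" using j(1) by auto
  then show ?thesis using j(2) unfolding n_def by simp
qed

text \<open>The far end of a longest path from x is a leaf: a further neighbour would either extend
  the path or close a cycle.\<close>
lemma exists_leaf_other_than:
  assumes fin: "finite T" and xT: "x \<in> T" and forest: "induces_forest E T" and irr: "\<forall>v. \<not> E v v"
  shows "\<exists>v\<in>T. card {u\<in>T. E v u} \<le> 1 \<and> (v \<noteq> x \<or> (\<forall>u\<in>T. \<not> E x u))"
proof -
  have "is_path_from E T x [x]" using xT unfolding is_path_from_def by auto
  moreover have "\<forall>p. is_path_from E T x p \<longrightarrow> length p < Suc (card T)"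
    unfolding is_path_from_def by (metis card_mono distinct_card fin less_Suc_eq_le)
  ultimately obtain p where p: "is_path_from E T x p"
    and longest: "\<And>q. is_path_from E T x q \<Longrightarrow> length q \<le> length p"
    using ex_has_greatest_nat[of "is_path_from E T x" "[x]" length "Suc (card T)"] by blast
  define n where "n = length p"
  have pne: "p \<noteq> []" and hd: "hd p = x" and dp: "distinct p" and sp: "set p \<subseteq> T"
    using p unfolding is_path_from_def by auto
  have last: "last p = p ! (n - 1)" using pne unfolding n_def by (simp add: last_conv_nth)
  have nbr: "n \<ge> 2 \<and> z = p ! (n - 2)" if "z \<in> T" "E (last p) z" for z
    using longest_path_last_nbr[OF p longest forest irr that] unfolding n_def .
  then have "{u\<in>T. E (last p) u} \<subseteq> {p ! (n - 2)}" by blast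
  then have "card {u\<in>T. E (last p) u} \<le> card {p ! (n - 2)}" by (intro card_mono) auto
  then have "card {u\<in>T. E (last p) u} \<le> 1" by simp
  moreover have "last p \<noteq> x \<or> (\<forall>u\<in>T. \<not> E x u)"
  proof (cases "n = 1")
    case True
    then have "last p = x" using hd pne last by (simp add: hd_conv_nth)
    then have "\<not> E x u" if "u \<in> T" for u using nbr[OF that] True by auto
    then show ?thesis by blast
  next
    case False
    moreover have "0 < n" using pne unfolding n_def by simp
    ultimately have "n \<ge> 2" by linarith
    then have "p ! (n - 1) \<noteq> p ! 0"
      using nth_eq_iff_index_eq[OF dp, of "n - 1" 0] pne unfolding n_def by auto
    then show ?thesis using hd pne last by (simp add: hd_conv_nth)
  qed
  moreover have "last p \<in> T" using pne sp by auto
  ultimately show ?thesis by blast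
qed

lemma reach_in_sym:
  assumes "\<forall>u v. E u v \<longrightarrow> E v u" and "reach_in E S a b"
  shows "reach_in E S b a"
proof -
  have "symp (\<lambda>x y. x \<in> S \<and> y \<in> S \<and> E x y)" using assms(1) by (auto intro: sympI)
  then show ?thesis using assms(2) unfolding reach_in_def by (metis sympD symp_rtranclp)
qed

lemma reach_in_trans: "reach_in E S a b \<Longrightarrow> reach_in E S b c \<Longrightarrow> reach_in E S a c"
  unfolding reach_in_def by auto

lemma reach_in_closed: "reach_in E S a b \<Longrightarrow> a \<in> S \<Longrightarrow> b \<in> S"
  unfolding reach_in_def by (induction rule: rtranclp_induct) auto

lemma reach_in_step: "reach_in E S a b \<Longrightarrow> b \<in> S \<Longrightarrow> c \<in> S \<Longrightarrow> E b c \<Longrightarrow> reach_in E S a c"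
  unfolding reach_in_def by (simp add: rtranclp.rtrancl_into_rtrancl)

lemma reach_in_mono: "reach_in E S a b \<Longrightarrow> S \<subseteq> S' \<Longrightarrow> reach_in E S' a b"
  unfolding reach_in_def by (erule rtranclp_mono[THEN predicate2D, rotated]) auto

lemma reach_in_first_edge: "reach_in E S a b \<Longrightarrow> a \<noteq> b \<Longrightarrow> \<exists>z\<in>S. E a z"
  unfolding reach_in_def by (induction rule: converse_rtranclp_induct) auto

text \<open>A walk through v enters and leaves it via the unique neighbour of v, so v can be cut out.\<close>
lemma reach_in_remove_leaf:
  assumes sym: "\<forall>u v. E u v \<longrightarrow> E v u" and irr: "\<forall>v. \<not> E v v"
    and leaf: "\<forall>a\<in>S. \<forall>b\<in>S. E v a \<longrightarrow> E v b \<longrightarrow> a = b"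
    and reach: "reach_in E S a b" and "a \<noteq> v" and "b \<noteq> v"
  shows "reach_in E (S - {v}) a b"
proof -
  have "if b = v then \<exists>u. reach_in E (S - {v}) a u \<and> u \<in> S \<and> E u v else reach_in E (S - {v}) a b"
    using reach unfolding reach_in_def[of E S]
  proof (induction rule: rtranclp_induct)
    case base
    then show ?case using \<open>a \<noteq> v\<close> by (simp add: reach_in_def)
  next
    case (step b c)
    then have bc: "b \<in> S" "c \<in> S" "E b c" by auto
    consider "c = v" | "c \<noteq> v" "b = v" | "c \<noteq> v" "b \<noteq> v" by blast
    then show ?case
    proof cases
      case 1
      then have "b \<noteq> v" using bc irr by auto
      then show ?thesis using 1 step.IH bc by auto
    next
      case 2
      then obtain u where "reach_in E (S - {v}) a u" "u \<in> S" "E v u" using step.IH sym by auto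
      moreover have "u = c" using leaf bc \<open>u \<in> S\<close> \<open>E v u\<close> 2(2) by blast
      ultimately show ?thesis using 2 by simp
    next
      case 3
      then show ?thesis using step.IH bc reach_in_closed[of E "S - {v}" a b] \<open>a \<noteq> v\<close>
        by (auto intro: reach_in_step)
    qed
  qed
  then show ?thesis using \<open>b \<noteq> v\<close> by simp
qed

lemma component_subset: "T \<in> components_of E S \<Longrightarrow> T \<subseteq> S"
  unfolding components_of_def using reach_in_closed by fastforce

lemma component_nonempty: "T \<in> components_of E S \<Longrightarrow> T \<noteq> {}"
  unfolding components_of_def reach_in_def by auto

lemma component_closed:
  "T \<in> components_of E S \<Longrightarrow> a \<in> T \<Longrightarrow> b \<in> S \<Longrightarrow> E a b \<Longrightarrow> b \<in> T"
  unfolding components_of_def using reach_in_closed reach_in_step by fastforce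

lemma component_eq:
  assumes "\<forall>u v. E u v \<longrightarrow> E v u" "T \<in> components_of E S" "a \<in> T"
  shows "T = {y. reach_in E S a y}"
  using assms unfolding components_of_def by (auto intro: reach_in_trans reach_in_sym)

lemma component_isolated:
  assumes "\<forall>u v. E u v \<longrightarrow> E v u" "T \<in> components_of E S" "a \<in> T" "\<forall>u\<in>T. \<not> E a u"
  shows "T = {a}"
proof -
  have "y = a" if "y \<in> T" for y
  proof (rule ccontr)
    assume "y \<noteq> a"
    moreover have "reach_in E S a y" using component_eq[OF assms(1-3)] that by auto
    ultimately obtain z where "z \<in> S" "E a z" using reach_in_first_edge by metis
    then show False using assms component_closed by metis
  qed
  then show ?thesis using assms(3) by blast
qed

lemma components_remove_leaf:
  assumes sym: "\<forall>u v. E u v \<longrightarrow> E v u" and irr: "\<forall>v. \<not> E v v"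
    and leaf: "\<forall>a\<in>S. \<forall>b\<in>S. E v a \<longrightarrow> E v b \<longrightarrow> a = b"
    and T: "T \<in> components_of E S" "v \<in> T"
    and T': "T' \<in> components_of E (S - {v})"
  shows "(T' \<in> components_of E S \<and> v \<notin> T') \<or> T' = T - {v}"
proof -
  obtain x where x: "x \<in> S - {v}" and T'_eq: "T' = {y. reach_in E (S - {v}) x y}"
    using T' unfolding components_of_def by auto
  define C where "C = {y. reach_in E S x y}"
  have C: "C \<in> components_of E S" using x unfolding C_def components_of_def by auto
  have "T' = C - {v}"
    unfolding T'_eq C_def using x reach_in_closed[of E "S - {v}" x] reach_in_mono[of E "S - {v}" x]
      reach_in_remove_leaf[OF sym irr leaf, of x] by blast
  moreover have "C = T" if "v \<in> C"
    using component_eq[OF sym C that] component_eq[OF sym T] by simp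
  ultimately show ?thesis using C by (cases "v \<in> C") auto
qed

lemma near_bipartite_on_insert_CI:
  assumes nb: "near_bipartite_on E W \<phi>" and "v \<notin> W" and sym: "\<forall>u v. E u v \<longrightarrow> E v u"
    and "\<not> E v v" and no_I: "{w\<in>W. E v w \<and> \<phi> w = CI} = {}"
  shows "near_bipartite_on E (insert v W) (\<phi>(v := CI))"
proof -
  have I: "{w \<in> insert v W. (\<phi>(v := CI)) w = CI} = insert v {w \<in> W. \<phi> w = CI}"
    and F: "{w \<in> insert v W. (\<phi>(v := CI)) w = CF} = {w \<in> W. \<phi> w = CF}"
    using \<open>v \<notin> W\<close> by auto
  have "independent E (insert v {w \<in> W. \<phi> w = CI})"
    using nb no_I sym \<open>\<not> E v v\<close> unfolding near_bipartite_on_def independent_def by blast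
  then show ?thesis using nb unfolding near_bipartite_on_def I F by simp
qed

lemma near_bipartite_on_insert_CF:
  assumes nb: "near_bipartite_on E W \<phi>" and "v \<notin> W" and sym: "\<forall>u v. E u v \<longrightarrow> E v u"
    and "finite W" and few_F: "card {w\<in>W. E v w \<and> \<phi> w = CF} \<le> 1"
  shows "near_bipartite_on E (insert v W) (\<phi>(v := CF))"
proof -
  have I: "{w \<in> insert v W. (\<phi>(v := CF)) w = CI} = {w \<in> W. \<phi> w = CI}"
    and F: "{w \<in> insert v W. (\<phi>(v := CF)) w = CF} = insert v {w \<in> W. \<phi> w = CF}"
    using \<open>v \<notin> W\<close> by auto
  have "\<forall>a\<in>{w\<in>W. E v w \<and> \<phi> w = CF}. \<forall>b\<in>{w\<in>W. E v w \<and> \<phi> w = CF}. a = b"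
    using few_F card_le_Suc0_iff_eq[of "{w\<in>W. E v w \<and> \<phi> w = CF}"] \<open>finite W\<close> by simp
  then have leaf: "\<forall>a\<in>{w \<in> W. \<phi> w = CF}. \<forall>b\<in>{w \<in> W. \<phi> w = CF}. E v a \<longrightarrow> E v b \<longrightarrow> a = b"
    by blast
  have "induces_forest E (insert v {w \<in> W. \<phi> w = CF})"
    using induces_forest_insert[OF _ sym leaf] nb unfolding near_bipartite_on_def by simp
  then show ?thesis using nb unfolding near_bipartite_on_def I F by simp
qed

lemma F_edges_finite:
  "finite T \<Longrightarrow> finite W \<Longrightarrow> finite {(u, w). u \<in> T \<and> w \<in> W \<and> E u w \<and> \<phi> w = CF}"
  by (rule finite_subset[of _ "T \<times> W"]) auto

lemma F_edges_count_insert: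
  assumes "u \<notin> T" "finite T" "finite W"
  shows "F_edges_count E W \<phi> (insert u T)
    = F_edges_count E W \<phi> T + card {w\<in>W. E u w \<and> \<phi> w = CF}"
proof -
  let ?A = "{(x, w). x \<in> T \<and> w \<in> W \<and> E x w \<and> \<phi> w = CF}"
  let ?B = "Pair u ` {w\<in>W. E u w \<and> \<phi> w = CF}"
  have "{(x, w). x \<in> insert u T \<and> w \<in> W \<and> E x w \<and> \<phi> w = CF} = ?A \<union> ?B"
    by auto
  moreover have "card (?A \<union> ?B) = card ?A + card ?B"
    using assms by (intro card_Un_disjoint F_edges_finite) auto
  moreover have "card ?B = card {w\<in>W. E u w \<and> \<phi> w = CF}"
    by (simp add: card_image inj_on_def)
  ultimately show ?thesis unfolding F_edges_count_def by simp
qed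

lemma F_edges_count_singleton:
  "finite W \<Longrightarrow> F_edges_count E W \<phi> {v} = card {w\<in>W. E v w \<and> \<phi> w = CF}"
  using F_edges_count_insert[of v "{}" W E \<phi>] by (simp add: F_edges_count_def)

lemma F_edges_count_insert_colored:
  assumes "v \<notin> W" "finite T" "finite W"
  shows "F_edges_count E (insert v W) (\<phi>(v := c)) T
    = F_edges_count E W \<phi> T + (if c = CF then card {u\<in>T. E u v} else 0)"
proof -
  let ?A = "{(u, w). u \<in> T \<and> w \<in> W \<and> E u w \<and> \<phi> w = CF}"
  let ?B = "(\<lambda>u. (u, v)) ` {u\<in>T. E u v \<and> c = CF}"
  have "{(u, w). u \<in> T \<and> w \<in> insert v W \<and> E u w \<and> (\<phi>(v := c)) w = CF} = ?A \<union> ?B"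
    using assms(1) by auto
  moreover have "card (?A \<union> ?B) = card ?A + card ?B"
    using assms by (intro card_Un_disjoint F_edges_finite) auto
  moreover have "card ?B = (if c = CF then card {u\<in>T. E u v} else 0)"
    by (simp add: card_image inj_on_def)
  ultimately show ?thesis unfolding F_edges_count_def by simp
qed

lemma F_leaf_good_extend:
  assumes "F_leaf_good E W \<phi> T" "finite W'" "W \<subseteq> W'" "\<forall>w\<in>W. \<phi>' w = \<phi> w"
  shows "F_leaf_good E W' \<phi>' T"
proof -
  have "card {w\<in>W. E x w \<and> \<phi> w = CI} \<le> card {w\<in>W'. E x w \<and> \<phi>' w = CI}" for x
    using assms(2-4) by (intro card_mono) auto
  then show ?thesis using assms(1) unfolding F_leaf_good_def by (meson order_trans)
qed

definition admissible_precoloring ::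
    "'a set \<Rightarrow> ('a \<Rightarrow> 'a \<Rightarrow> bool) \<Rightarrow> 'a set \<Rightarrow> ('a \<Rightarrow> color) \<Rightarrow> bool" where
  "admissible_precoloring V E W \<phi> \<longleftrightarrow> W \<subseteq> V \<and> near_bipartite_on E W \<phi> \<and> induces_forest E (V - W)
     \<and> (\<forall>v\<in>V - W. degree V E v = 3)
     \<and> (\<forall>T\<in>components_of E (V - W). F_odd E W \<phi> T \<or> F_leaf_good E W \<phi> T)"

definition leaf_color :: "('a \<Rightarrow> 'a \<Rightarrow> bool) \<Rightarrow> 'a set \<Rightarrow> ('a \<Rightarrow> color) \<Rightarrow> 'a \<Rightarrow> color" where
  "leaf_color E W \<phi> v = (if {w\<in>W. E v w \<and> \<phi> w = CI} = {} then CI else CF)"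

locale removable_leaf =
  fixes V :: "'a set" and E :: "'a \<Rightarrow> 'a \<Rightarrow> bool" and W :: "'a set" and \<phi> :: "'a \<Rightarrow> color"
    and T :: "'a set" and v :: 'a
  assumes graph: "simple_graph V E"
    and admissible: "admissible_precoloring V E W \<phi>"
    and T: "T \<in> components_of E (V - W)" and v_in_T: "v \<in> T"
    and v_leaf: "card {u\<in>T. E v u} \<le> 1"
    and T_good: "(F_odd E W \<phi> T \<and> card {w\<in>W. E v w \<and> \<phi> w = CI} \<le> 1)
      \<or> F_leaf_good E W \<phi> (T - {v}) \<or> (T = {v} \<and> F_leaf_good E W \<phi> T)"
begin

lemma E_sym: "\<forall>u v. E u v \<longrightarrow> E v u" and E_irrefl: "\<forall>v. \<not> E v v"
  and edges_in_V: "\<forall>u v. E u v \<longrightarrow> u \<in> V \<and> v \<in> V"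
  using graph unfolding simple_graph_def by auto

lemma finite_V: "finite V"
  using graph unfolding simple_graph_def by simp

lemma W_subset: "W \<subseteq> V" and finite_W: "finite W"
  using admissible graph unfolding admissible_precoloring_def simple_graph_def
  by (auto intro: finite_subset)

lemma T_subset: "T \<subseteq> V - W" and finite_T: "finite T"
  using component_subset[OF T] graph unfolding simple_graph_def by (auto intro: finite_subset)

lemma v_in_forest: "v \<in> V - W"
  using T_subset v_in_T by auto

lemma forest_nbrs_eq: "{u\<in>V - W. E v u} = {u\<in>T. E v u}"
  using component_closed[OF T v_in_T] T_subset by auto

lemma v_unique_nbr: "\<forall>a\<in>V - W. \<forall>b\<in>V - W. E v a \<longrightarrow> E v b \<longrightarrow> a = b"
  using v_leaf card_le_Suc0_iff_eq[of "{u\<in>T. E v u}"] finite_T forest_nbrs_eq by auto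

lemma T_eq_singleton: "{u\<in>T. E v u} = {} \<Longrightarrow> T = {v}"
  using component_isolated[OF E_sym T v_in_T] by auto

lemma degree_split:
  "card {w\<in>W. E v w \<and> \<phi> w = CI} + card {w\<in>W. E v w \<and> \<phi> w = CF} + card {u\<in>T. E v u} = 3"
proof -
  let ?I = "{w\<in>W. E v w \<and> \<phi> w = CI}" and ?F = "{w\<in>W. E v w \<and> \<phi> w = CF}"
    and ?N = "{u\<in>T. E v u}"
  have "{u\<in>V. E v u} = ?I \<union> ?F \<union> ?N"
    using forest_nbrs_eq W_subset T_subset edges_in_V by (auto intro: color.exhaust)
  moreover have "card (?I \<union> ?F) = card ?I + card ?F"
    using finite_W by (intro card_Un_disjoint) auto
  moreover have "card (?I \<union> ?F \<union> ?N) = card (?I \<union> ?F) + card ?N"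
    using finite_W finite_T T_subset by (intro card_Un_disjoint) auto
  moreover have "degree V E v = 3"
    using admissible v_in_forest unfolding admissible_precoloring_def by auto
  ultimately show ?thesis unfolding degree_def by simp
qed

lemma few_F_nbrs:
  assumes "leaf_color E W \<phi> v = CF"
  shows "card {w\<in>W. E v w \<and> \<phi> w = CF} \<le> 1"
proof -
  have "{w\<in>W. E v w \<and> \<phi> w = CI} \<noteq> {}"
    using assms unfolding leaf_color_def by (auto split: if_splits)
  then have I: "card {w\<in>W. E v w \<and> \<phi> w = CI} \<ge> 1"
    using finite_W by (simp add: Suc_le_eq card_gt_0_iff)
  show ?thesis
  proof (cases "{u\<in>T. E v u} = {}")
    case False
    then have "card {u\<in>T. E v u} \<ge> 1" using finite_T by (simp add: Suc_le_eq card_gt_0_iff)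
    then show ?thesis using degree_split I by linarith
  next
    case True
    then have Tv: "T = {v}" using T_eq_singleton by simp
    have deg: "card {w\<in>W. E v w \<and> \<phi> w = CI} + card {w\<in>W. E v w \<and> \<phi> w = CF} = 3"
      using degree_split True by simp
    consider "F_odd E W \<phi> {v}" | "F_leaf_good E W \<phi> {v}"
      using T_good Tv unfolding F_leaf_good_def by auto
    then show ?thesis
    proof cases
      case 1
      then have "odd (card {w\<in>W. E v w \<and> \<phi> w = CF})"
        using F_edges_count_singleton[OF finite_W] unfolding F_odd_def by simp
      then show ?thesis using deg I by presburger
    next
      case 2
      then have "card {w\<in>W. E v w \<and> \<phi> w = CI} \<ge> 2" unfolding F_leaf_good_def by auto
      then show ?thesis using deg by linarith
    qed
  qed
qed

lemma near_bipartite_extended: "near_bipartite_on E (insert v W) (\<phi>(v := leaf_color E W \<phi> v))"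
proof -
  have nb: "near_bipartite_on E W \<phi>" using admissible unfolding admissible_precoloring_def by simp
  have "v \<notin> W" using v_in_forest by simp
  show ?thesis
  proof (cases "leaf_color E W \<phi> v")
    case CI
    then have "{w\<in>W. E v w \<and> \<phi> w = CI} = {}" unfolding leaf_color_def by (auto split: if_splits)
    with CI show ?thesis using near_bipartite_on_insert_CI[OF nb \<open>v \<notin> W\<close> E_sym] E_irrefl by simp
  next
    case CF
    then show ?thesis
      using near_bipartite_on_insert_CF[OF nb \<open>v \<notin> W\<close> E_sym finite_W] few_F_nbrs by simp
  qed
qed

lemma extension_agrees: "\<forall>w\<in>W. (\<phi>(v := leaf_color E W \<phi> v)) w = \<phi> w"
  using v_in_forest by auto

lemma untouched_component_good:
  assumes T': "T' \<in> components_of E (V - W)" and "v \<notin> T'"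
  shows "F_odd E (insert v W) (\<phi>(v := leaf_color E W \<phi> v)) T'
    \<or> F_leaf_good E (insert v W) (\<phi>(v := leaf_color E W \<phi> v)) T'"
proof -
  have "finite T'" using component_subset[OF T'] finite_V finite_subset by blast
  moreover have no_edge: "{u\<in>T'. E u v} = {}"
    using component_closed[OF T'] v_in_forest \<open>v \<notin> T'\<close> by auto
  ultimately have "F_edges_count E (insert v W) (\<phi>(v := leaf_color E W \<phi> v)) T'
      = F_edges_count E W \<phi> T'"
    using F_edges_count_insert_colored[of v W T' E \<phi> "leaf_color E W \<phi> v"] v_in_forest finite_W
    unfolding no_edge by simp
  moreover have "F_leaf_good E (insert v W) (\<phi>(v := leaf_color E W \<phi> v)) T'"
    if "F_leaf_good E W \<phi> T'"
    by (rule F_leaf_good_extend[OF that _ _ extension_agrees]) (use finite_W in auto)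
  moreover have "F_odd E W \<phi> T' \<or> F_leaf_good E W \<phi> T'"
    using admissible T' unfolding admissible_precoloring_def by blast
  ultimately show ?thesis unfolding F_odd_def by auto
qed

lemma shrunk_component_good:
  assumes "T - {v} \<noteq> {}"
  shows "F_odd E (insert v W) (\<phi>(v := leaf_color E W \<phi> v)) (T - {v})
    \<or> F_leaf_good E (insert v W) (\<phi>(v := leaf_color E W \<phi> v)) (T - {v})"
proof -
  from T_good assms consider
      (odd) "F_odd E W \<phi> T" "card {w\<in>W. E v w \<and> \<phi> w = CI} \<le> 1"
    | (leaf) "F_leaf_good E W \<phi> (T - {v})"
    by auto
  then show ?thesis
  proof cases
    case leaf
    have "F_leaf_good E (insert v W) (\<phi>(v := leaf_color E W \<phi> v)) (T - {v})"
      by (rule F_leaf_good_extend[OF leaf _ _ extension_agrees]) (use finite_W in auto)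
    then show ?thesis ..
  next
    case odd
    have "{u\<in>T. E v u} \<noteq> {}" using T_eq_singleton assms by auto
    then have "card {u\<in>T. E v u} = 1" using v_leaf finite_T by (simp add: card_gt_0_iff le_antisym Suc_le_eq)
    moreover have "{u\<in>T - {v}. E u v} = {u\<in>T. E v u}" using E_sym E_irrefl by auto
    ultimately have new: "F_edges_count E (insert v W) (\<phi>(v := leaf_color E W \<phi> v)) (T - {v})
        = F_edges_count E W \<phi> (T - {v}) + (if leaf_color E W \<phi> v = CF then 1 else 0)"
      using F_edges_count_insert_colored[of v W "T - {v}"] v_in_forest finite_T finite_W by simp
    have old: "F_edges_count E W \<phi> T
        = F_edges_count E W \<phi> (T - {v}) + card {w\<in>W. E v w \<and> \<phi> w = CF}"
      using F_edges_count_insert[of v "T - {v}" W] finite_T finite_W v_in_T by (simp add: insert_absorb)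
    have deg: "card {w\<in>W. E v w \<and> \<phi> w = CI} + card {w\<in>W. E v w \<and> \<phi> w = CF} = 2"
      using degree_split \<open>card {u\<in>T. E v u} = 1\<close> by simp
    have no_I: "card {w\<in>W. E v w \<and> \<phi> w = CI} = 0 \<longleftrightarrow> leaf_color E W \<phi> v = CI"
      using finite_W unfolding leaf_color_def by simp
    have "odd (F_edges_count E (insert v W) (\<phi>(v := leaf_color E W \<phi> v)) (T - {v}))"
    proof (cases "leaf_color E W \<phi> v")
      case CI
      then have "card {w\<in>W. E v w \<and> \<phi> w = CF} = 2" using deg no_I by simp
      then show ?thesis using odd(1) new old CI unfolding F_odd_def by simp
    next
      case CF
      then have "card {w\<in>W. E v w \<and> \<phi> w = CF} = 1" using deg no_I odd(2) by simp
      then show ?thesis using odd(1) new old CF unfolding F_odd_def by simp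
    qed
    then show ?thesis unfolding F_odd_def by simp
  qed
qed

lemma admissible_extended:
  "admissible_precoloring V E (insert v W) (\<phi>(v := leaf_color E W \<phi> v))"
  unfolding admissible_precoloring_def
proof (intro conjI ballI)
  show "insert v W \<subseteq> V" using v_in_forest W_subset by auto
  show "near_bipartite_on E (insert v W) (\<phi>(v := leaf_color E W \<phi> v))"
    by (rule near_bipartite_extended)
  show "induces_forest E (V - insert v W)"
    using admissible induces_forest_subset[of E "V - W" "V - insert v W"]
    unfolding admissible_precoloring_def by auto
  show "degree V E u = 3" if "u \<in> V - insert v W" for u
    using admissible that unfolding admissible_precoloring_def by auto
next
  fix T' assume T': "T' \<in> components_of E (V - insert v W)"
  moreover have "V - insert v W = V - W - {v}" by blast
  ultimately have "T' \<in> components_of E (V - W - {v})" by simp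
  from components_remove_leaf[OF E_sym E_irrefl v_unique_nbr T v_in_T this]
  show "F_odd E (insert v W) (\<phi>(v := leaf_color E W \<phi> v)) T'
    \<or> F_leaf_good E (insert v W) (\<phi>(v := leaf_color E W \<phi> v)) T'"
  proof
    assume "T' \<in> components_of E (V - W) \<and> v \<notin> T'"
    then show ?thesis using untouched_component_good by blast
  next
    assume "T' = T - {v}"
    then show ?thesis using shrunk_component_good component_nonempty[OF T'] by simp
  qed
qed

end

lemma component_has_removable_leaf:
  assumes sym: "\<forall>u v. E u v \<longrightarrow> E v u" and irr: "\<forall>v. \<not> E v v"
    and T: "T \<in> components_of E S" and "finite T" and forest: "induces_forest E T"
    and T_good: "F_odd E W \<phi> T \<or> F_leaf_good E W \<phi> T"
  shows "\<exists>v\<in>T. card {u\<in>T. E v u} \<le> 1 \<and> ((F_odd E W \<phi> T \<and> card {w\<in>W. E v w \<and> \<phi> w = CI} \<le> 1)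
    \<or> F_leaf_good E W \<phi> (T - {v}) \<or> (T = {v} \<and> F_leaf_good E W \<phi> T))"
proof (cases "F_leaf_good E W \<phi> T")
  case True
  then obtain x where "x \<in> T" and x_leaf: "card {u\<in>T. E x u} \<le> 1"
    and x_good: "card {w\<in>W. E x w \<and> \<phi> w = CI} \<ge> 2"
    unfolding F_leaf_good_def by blast
  obtain v where "v \<in> T" "card {u\<in>T. E v u} \<le> 1" and v_x: "v \<noteq> x \<or> (\<forall>u\<in>T. \<not> E x u)"
    using exists_leaf_other_than[OF \<open>finite T\<close> \<open>x \<in> T\<close> forest irr] by blast
  moreover have "T = {v} \<or> F_leaf_good E W \<phi> (T - {v})"
  proof (cases "v = x")
    case True
    then show ?thesis using v_x component_isolated[OF sym T \<open>x \<in> T\<close>] by auto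
  next
    case False
    have "card {u\<in>T - {v}. E x u} \<le> card {u\<in>T. E x u}"
      using \<open>finite T\<close> by (intro card_mono) auto
    then show ?thesis using x_leaf x_good False \<open>x \<in> T\<close> unfolding F_leaf_good_def by force
  qed
  ultimately show ?thesis using True by blast
next
  case False
  obtain x where "x \<in> T" using component_nonempty[OF T] by blast
  obtain v where "v \<in> T" "card {u\<in>T. E v u} \<le> 1"
    using exists_leaf_other_than[OF \<open>finite T\<close> \<open>x \<in> T\<close> forest irr] by blast
  moreover have "\<not> card {w\<in>W. E v w \<and> \<phi> w = CI} \<ge> 2"
    using False calculation unfolding F_leaf_good_def by blast
  ultimately show ?thesis using T_good False by auto
qed

lemma exists_removable_leaf:
  assumes graph: "simple_graph V E" and admissible: "admissible_precoloring V E W \<phi>"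
    and "V - W \<noteq> {}"
  shows "\<exists>T v. removable_leaf V E W \<phi> T v"
proof -
  have sym: "\<forall>u v. E u v \<longrightarrow> E v u" and irrefl: "\<forall>v. \<not> E v v" and "finite V"
    using graph unfolding simple_graph_def by auto
  obtain T where T: "T \<in> components_of E (V - W)"
    using \<open>V - W \<noteq> {}\<close> unfolding components_of_def by auto
  have "finite T" using component_subset[OF T] \<open>finite V\<close> by (auto intro: finite_subset)
  moreover have "induces_forest E T"
    using admissible component_subset[OF T] induces_forest_subset
    unfolding admissible_precoloring_def by blast
  moreover have "F_odd E W \<phi> T \<or> F_leaf_good E W \<phi> T"
    using admissible T unfolding admissible_precoloring_def by blast
  ultimately obtain v where "v \<in> T" "card {u\<in>T. E v u} \<le> 1"
    "(F_odd E W \<phi> T \<and> card {w\<in>W. E v w \<and> \<phi> w = CI} \<le> 1)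
      \<or> F_leaf_good E W \<phi> (T - {v}) \<or> (T = {v} \<and> F_leaf_good E W \<phi> T)"
    using component_has_removable_leaf[OF sym irrefl T] by blast
  then have "removable_leaf V E W \<phi> T v"
    using graph admissible T by unfold_locales
  then show ?thesis by blast
qed

lemma admissible_precoloring_extends:
  assumes "simple_graph V E" "admissible_precoloring V E W \<phi>"
  shows "\<exists>\<psi>. (\<forall>w\<in>W. \<psi> w = \<phi> w) \<and> near_bipartite_on E V \<psi>"
  using assms(2)
proof (induction "card (V - W)" arbitrary: W \<phi> rule: less_induct)
  case less
  show ?case
  proof (cases "V - W = {}")
    case True
    then show ?thesis using less.prems unfolding admissible_precoloring_def by (auto intro!: exI[of _ \<phi>])
  next
    case False
    then obtain T v where "removable_leaf V E W \<phi> T v"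
      using exists_removable_leaf[OF assms(1) less.prems] by blast
    then interpret removable_leaf V E W \<phi> T v .
    have "card (V - insert v W) < card (V - W)"
      using v_in_forest finite_V by (metis Diff_insert card_Diff1_less finite_Diff)
    then obtain \<psi> where agree: "\<forall>w\<in>insert v W. \<psi> w = (\<phi>(v := leaf_color E W \<phi> v)) w"
      and "near_bipartite_on E V \<psi>"
      using less.hyps[OF _ admissible_extended] by blast
    moreover have "\<forall>w\<in>W. \<psi> w = \<phi> w" using agree extension_agrees by simp
    ultimately show ?thesis by blast
  qed
qed

theorem lemma4p35:
  fixes V W :: "'a set" and E :: "'a \<Rightarrow> 'a \<Rightarrow> bool" and \<phi>' :: "'a \<Rightarrow> color"
  assumes "simple_graph V E"
    and "W \<subseteq> V"
    and "near_bipartite_on E W \<phi>'"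
    and "induces_forest E (V - W)"
    and "\<forall>v \<in> V - W. degree V E v = 3"
    and "\<forall>T \<in> components_of E (V - W). F_odd E W \<phi>' T \<or> F_leaf_good E W \<phi>' T"
  shows "\<exists>\<phi>. (\<forall>w\<in>W. \<phi> w = \<phi>' w) \<and> near_bipartite_on E V \<phi>"
  using admissible_precoloring_extends[OF assms(1)] assms(2-)
  unfolding admissible_precoloring_def by blast

end
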